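(* Let $A$ be a countable set, $\phi:\mathcal{X}_-\to\mathbb{R}$ a potential, and $(M_n)_{n\ge1}$ a strictly increasing sequence of natural numbers with $M_1=1$. Let $x,y\in\mathcal{X}_-$ and let $\mu,\nu\in\mathcal{P}(\phi)$ with $\mu[\eta_{-\infty}^0\in\cdot\,]=\delta_x$ and $\nu[\eta_{-\infty}^0\in\cdot\,]=\delta_y$. Then for all $n\ge1$, $0\le k\le n-1$ and all $a,b,c\in\mathcal{X}$, letting $w^{(b)}$ (resp. $w^{(c)}$) be the word $(w_1,\dots,w_{M_n-1})$ with $w_j=a_j$ for $M_{n-k}\le j\le M_n-1$ and $w_j=b_j$ (resp. $w_j=c_j$) for $1\le j<M_{n-k}$, \[ D_{\mathrm{KL}}\Big(\mu\big[\eta_{M_n}^{M_{n+1}-1}\in\cdot\mid \eta_1^{M_n-1}=w^{(b)}\big]\,\Big\|\,\nu\big[\eta_{M_n}^{M_{n+1}-1}\in\cdot\mid\eta_1^{M_n-1}=w^{(c)}\big]\Big)\le \sum_{j=M_n}^{M_{n+1}-1}\chi^2_{j-M_{n-k}}(\phi). \]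
   Context: $\mathcal{X}=A^{\mathbb{Z}}$, $\mathcal{X}_-=A^{\{0,-1,-2,\dots\}}$. For $a\in A$, $x\in\mathcal{X}_-$, $ax\in\mathcal{X}_-$ is the sequence $w$ with $w_0=a$, $w_{-m-1}=x_{-m}$ ($m\ge0$); for $b\in A$, $z\in\mathcal{X}$, $k\ge0$, $x\in\mathcal{X}_-$, $bz_{-k}^{-1}x$ is the sequence $w\in\mathcal{X}_-$ with $w_0=b$, $w_{-j}=z_{-j}$ ($1\le j\le k$), $w_{-k-1-m}=x_{-m}$ ($m\ge0$) (for $k=0$ this is $bx$). A potential is a measurable $\phi:\mathcal{X}_-\to\mathbb{R}$ with $\sum_{a\in A}e^{\phi(ax)}=1$ for all $x$. For $k\ge0$, $\chi^2_k(\phi)=\sup_{z\in\mathcal{X}}\sup_{x,y\in\mathcal{X}_-}\sum_{b\in A}\big(e^{\phi(bz_{-k}^{-1}x)}-e^{\phi(bz_{-k}^{-1}y)}\big)^2/e^{\phi(bz_{-k}^{-1}y)}$ (possibly $+\infty$). $\eta_n(x)=x_n$ on $\mathcal{X}$; $\eta_{-\infty}^n\in\mathcal{X}_-$ has coordinate $\eta_{n-m}$ at $-m$; $\eta_i^j=(\eta_i,\dots,\eta_j)$. A probability $\mu$ on $\mathcal{X}$ is compatible with $\phi$ if for all $n\ge0$, $a\in A$: $\mu[\eta_{n+1}=a\mid\eta_{-\infty}^n]=e^{\phi(a\,\eta_{-\infty}^n)}$ $\mu$-a.s.; $\mathcal{P}(\phi)$ is the set of such measures. For $\mu$ with $\mu[\eta_{-\infty}^0\in\cdot]=\delta_x$,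 the conditional law of the block $\eta_{m}^{m'}$ given $\eta_1^{m-1}=(w_1,\dots,w_{m-1})$ is the probability on $A^{m'-m+1}$ giving $(u_m,\dots,u_{m'})$ mass $\prod_{i=m}^{m'}e^{\phi(v^{(i)})}$, where $v^{(i)}\in\mathcal{X}_-$ has coordinates $u_i,u_{i-1},\dots,u_m,w_{m-1},\dots,w_1,x_0,x_{-1},\dots$ at positions $0,-1,-2,\dots$. $D_{\mathrm{KL}}(P\|Q)=\sum_yP(y)\ln(P(y)/Q(y))$. *)

theory Defs
  imports "HOL-Probability.Probability"
begin

text \<open>X = A^Z is modelled as int => 'a; X_- = A^{0,-1,-2,...} as nat => 'a,
  where (x :: nat => 'a) m is the coordinate at position -m.
  A countable set A is the countable type 'a, with the discrete sigma-algebra.\<close>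

definition XM :: "(int \<Rightarrow> 'a) measure" where
  "XM = PiM UNIV (\<lambda>_. count_space UNIV)"

definition XmM :: "(nat \<Rightarrow> 'a) measure" where
  "XmM = PiM UNIV (\<lambda>_. count_space UNIV)"

definition cons_past :: "'a \<Rightarrow> (nat \<Rightarrow> 'a) \<Rightarrow> (nat \<Rightarrow> 'a)" where
  "cons_past a x = (\<lambda>j. if j = 0 then a else x (j - 1))"

definition block_past :: "'a \<Rightarrow> (int \<Rightarrow> 'a) \<Rightarrow> nat \<Rightarrow> (nat \<Rightarrow> 'a) \<Rightarrow> (nat \<Rightarrow> 'a)" where
  "block_past b z k x = (\<lambda>j. if j = 0 then b else if j \<le> k then z (- int j) else x (j - k - 1))"

definition potential :: "((nat \<Rightarrow> 'a::countable) \<Rightarrow> real) \<Rightarrow> bool" where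
  "potential \<phi> \<longleftrightarrow> \<phi> \<in> borel_measurable XmM \<and>
     (\<forall>x. ((\<lambda>a. exp (\<phi> (cons_past a x))) has_sum 1) UNIV)"

definition chi2 :: "((nat \<Rightarrow> 'a::countable) \<Rightarrow> real) \<Rightarrow> nat \<Rightarrow> ennreal" where
  "chi2 \<phi> k = (SUP z \<in> UNIV. SUP x \<in> UNIV. SUP y \<in> UNIV.
      (\<Sum>\<^sub>\<infinity> b. ennreal ((exp (\<phi> (block_past b z k x)) - exp (\<phi> (block_past b z k y)))\<^sup>2
                        / exp (\<phi> (block_past b z k y)))))"

definition past :: "int \<Rightarrow> (int \<Rightarrow> 'a) \<Rightarrow> (nat \<Rightarrow> 'a)" where
  "past n \<omega> = (\<lambda>m. \<omega> (n - int m))"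

definition compatible_with :: "((nat \<Rightarrow> 'a::countable) \<Rightarrow> real) \<Rightarrow> (int \<Rightarrow> 'a) measure \<Rightarrow> bool" where
  "compatible_with \<phi> \<mu> \<longleftrightarrow> prob_space \<mu> \<and> sets \<mu> = sets XM \<and>
     (\<forall>(n::nat) a. AE \<omega> in \<mu>.
        real_cond_exp \<mu> (vimage_algebra (space \<mu>) (past (int n)) XmM)
          (indicator {\<omega>. \<omega> (int n + 1) = a}) \<omega> = exp (\<phi> (cons_past a (past (int n) \<omega>))))"

text \<open>Sequence in X_- obtained by writing the finite word s (s ! 0 earliest, last s at position 0)
  in front of the past x.\<close>
definition prepend :: "'a list \<Rightarrow> (nat \<Rightarrow> 'a) \<Rightarrow> (nat \<Rightarrow> 'a)" where
  "prepend s x = (\<lambda>j. if j < length s then rev s ! j else x (j - length s))"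

text \<open>Conditional law (given the past x at time 0) of the block eta_m^{m'} given
  eta_1^{m-1} = (w 1, ..., w (m-1)); a block (u_m, ..., u_{m'}) is the list u with u ! t = u_{m+t}.\<close>
definition cond_block_law :: "((nat \<Rightarrow> 'a) \<Rightarrow> real) \<Rightarrow> (nat \<Rightarrow> 'a) \<Rightarrow> nat \<Rightarrow> (nat \<Rightarrow> 'a) \<Rightarrow> 'a list \<Rightarrow> real" where
  "cond_block_law \<phi> x m w u =
     (\<Prod>t<length u. exp (\<phi> (prepend (map w [1..<m] @ take (Suc t) u) x)))"

text \<open>D_KL(P||Q) = sum_{y in S} P(y) ln(P(y)/Q(y)), with values in extended reals:
  +infinity if P(y) > 0 = Q(y) for some y, otherwise the (well-defined) difference of the
  sums of the positive and of the negative parts of the terms (0 ln(0/q) = 0).\<close>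
definition KL :: "('b \<Rightarrow> real) \<Rightarrow> ('b \<Rightarrow> real) \<Rightarrow> 'b set \<Rightarrow> ereal" where
  "KL P Q S = (if \<exists>y\<in>S. P y > 0 \<and> Q y = 0 then \<infinity> else
     enn2ereal (\<Sum>\<^sub>\<infinity> y\<in>S. ennreal (P y * ln (P y / Q y)))
     - enn2ereal (\<Sum>\<^sub>\<infinity> y\<in>S. ennreal (- (P y * ln (P y / Q y)))))"

end

theory Submission
  imports Defs
begin

text \<open>Let \<open>g p q = p ln (p/q) - p + q \<ge> 0\<close>. For probability vectors \<open>P, Q\<close> the sum of
  \<open>g (P y) (Q y)\<close> is \<open>D_KL(P\<parallel>Q)\<close>, and \<open>g\<close> obeys a chain rule: for product laws
  \<open>p v \<cdot> P\<^sub>v u\<close> and \<open>q v \<cdot> Q\<^sub>v u\<close> the total is \<open>\<Sum>\<^sub>v p v \<cdot> \<Sum>\<^sub>u g (P\<^sub>v u) (Q\<^sub>v u) + \<Sum>\<^sub>v g (p v) (q v)\<close>.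
  The conditional block laws are products of the one-step kernels \<open>exp \<phi>\<close>, so by induction on
  the block length their divergence is at most the sum of the one-step terms. Since
  \<open>g p q \<le> (p - q)\<^sup>2 / q\<close>, the \<open>t\<close>-th of these is at most \<open>\<chi>\<^sup>2\<close> of order \<open>d + t\<close>, where
  \<open>d = M n - M (n - k)\<close> is the number of most recent symbols on which the two conditioning
  pasts agree.\<close>

lemma has_sum_ennreal:
  assumes "(f has_sum s) S" "\<And>x. x \<in> S \<Longrightarrow> f x \<ge> 0"
  shows "((\<lambda>x. ennreal (f x)) has_sum ennreal s) S"
proof -
  have "((ennreal \<circ> f) has_sum ennreal s) S"
  proof (rule has_sum_comm_additive_general)
    fix F assume "finite F" "F \<subseteq> S"
    then show "sum (ennreal \<circ> f) F = ennreal (sum f F)"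
      using assms(2) by (subst sum_ennreal[symmetric]) auto
  next
    show "ennreal \<midarrow>s\<rightarrow> ennreal s"
      using isCont_ennreal[of s] by (simp add: isCont_def)
  qed (fact assms(1))
  then show ?thesis by (simp add: comp_def)
qed

lemma has_sum_le_if_ennreal_infsum_le:
  fixes f :: "'b \<Rightarrow> real"
  assumes le: "(\<Sum>\<^sub>\<infinity>x\<in>S. ennreal (f x)) \<le> c" and fin: "c \<noteq> \<top>"
    and nonneg: "\<And>x. x \<in> S \<Longrightarrow> f x \<ge> 0"
  obtains s where "(f has_sum s) S" "s \<le> enn2real c"
proof -
  have partial: "sum f F \<le> enn2real c" if "finite F" "F \<subseteq> S" for F
  proof -
    have "ennreal (sum f F) = (\<Sum>x\<in>F. ennreal (f x))"
      using that nonneg by (subst sum_ennreal) auto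
    also have "\<dots> \<le> (\<Sum>\<^sub>\<infinity>x\<in>S. ennreal (f x))"
      using that by (subst nonneg_infsum_complete) (auto intro: SUP_upper)
    finally have "enn2real (ennreal (sum f F)) \<le> enn2real c"
      using le fin by (intro enn2real_mono) (auto simp: top.not_eq_extremum)
    then show ?thesis
      using that nonneg by (simp add: sum_nonneg subset_eq)
  qed
  have "f summable_on S"
    using nonneg partial by (intro nonneg_bdd_above_summable_on bdd_aboveI) auto
  then show thesis
    using partial by (intro that[of "infsum f S"] has_sum_infsum infsum_le_finite_sums)
qed

lemma enn2ereal_infsum_pos_part_minus_neg_part:
  fixes h :: "'b \<Rightarrow> real"
  assumes h: "(h has_sum K) S"
  shows "enn2ereal (\<Sum>\<^sub>\<infinity>y\<in>S. ennreal (h y)) - enn2ereal (\<Sum>\<^sub>\<infinity>y\<in>S. ennreal (- h y)) = ereal K"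
proof -
  have "(\<lambda>y. norm (h y)) summable_on S"
    using h summable_on_iff_abs_summable_on_real by (blast dest: has_sum_imp_summable)
  then have "(\<lambda>y. max 0 (h y)) summable_on S" "(\<lambda>y. max 0 (- h y)) summable_on S"
    by (auto intro: summable_on_comparison_test)
  then obtain A_pos A_neg where pos: "((\<lambda>y. max 0 (h y)) has_sum A_pos) S"
    and neg: "((\<lambda>y. max 0 (- h y)) has_sum A_neg) S"
    by (auto simp: summable_on_def)
  have "((\<lambda>y. max 0 (h y) + - max 0 (- h y)) has_sum A_pos + - A_neg) S"
    by (intro has_sum_add has_sum_uminusI pos neg)
  moreover have "(\<lambda>y. max 0 (h y) + - max 0 (- h y)) = h"
    by (auto simp: fun_eq_iff max_def)
  ultimately have "(h has_sum A_pos - A_neg) S"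
    by simp
  then have "A_pos - A_neg = K"
    using h by (rule has_sum_unique)
  moreover have "(\<Sum>\<^sub>\<infinity>y\<in>S. ennreal (h y)) = ennreal A_pos" "(\<Sum>\<^sub>\<infinity>y\<in>S. ennreal (- h y)) = ennreal A_neg"
    using has_sum_ennreal[OF pos] has_sum_ennreal[OF neg] by (auto simp: infsumI)
  moreover have "A_pos \<ge> 0" "A_neg \<ge> 0"
    using pos neg by (auto intro: has_sum_nonneg)
  ultimately show ?thesis
    by simp
qed

lemma has_sum_lists_Suc_iff:
  "(f has_sum s) {u. length u = Suc L} \<longleftrightarrow>
     ((\<lambda>(v, u). f (v # u)) has_sum s) (UNIV \<times> {u. length u = L})"
proof -
  let ?cons = "\<lambda>(v, u). v # u"
  have "{u. length u = Suc L} = ?cons ` (UNIV \<times> {u. length u = L})"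
    by (auto simp: length_Suc_conv image_iff)
  moreover have "inj_on ?cons (UNIV \<times> {u. length u = L})"
    by (auto simp: inj_on_def)
  moreover have "f \<circ> ?cons = (\<lambda>(v, u). f (v # u))"
    by (auto simp: fun_eq_iff)
  ultimately show ?thesis
    by (metis has_sum_reindex)
qed

definition gen_kl :: "real \<Rightarrow> real \<Rightarrow> real" where
  "gen_kl p q = p * ln (p / q) - p + q"

lemma gen_kl_nonneg:
  assumes "p > 0" "q > 0"
  shows "gen_kl p q \<ge> 0"
proof -
  have "p * ln (q / p) \<le> p * (q / p - 1)"
    using assms by (intro mult_left_mono ln_le_minus_one) auto
  moreover have "p * (q / p - 1) = q - p" "ln (p / q) = - ln (q / p)"
    using assms by (simp_all add: field_simps ln_div)
  ultimately show ?thesis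
    by (simp add: gen_kl_def)
qed

lemma gen_kl_le_chi2:
  assumes "p > 0" "q > 0"
  shows "gen_kl p q \<le> (p - q)\<^sup>2 / q"
proof -
  have "p * ln (p / q) \<le> p * (p / q - 1)"
    using assms by (intro mult_left_mono ln_le_minus_one) auto
  moreover have "(p - q)\<^sup>2 / q = p * (p / q - 1) - p + q"
    using assms by (simp add: field_simps power2_eq_square)
  ultimately show ?thesis
    by (simp add: gen_kl_def)
qed

lemma gen_kl_mult:
  assumes "p > 0" "q > 0" "P > 0" "Q > 0"
  shows "gen_kl (p * P) (q * Q) = p * gen_kl P Q + P * gen_kl p q + (p - q) * P + (q - p) * Q"
proof -
  have "ln ((p * P) / (q * Q)) = ln (p / q) + ln (P / Q)"
    using assms by (simp add: ln_div ln_mult)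
  then show ?thesis
    unfolding gen_kl_def by (simp add: algebra_simps)
qed

lemma gen_kl_has_sum_mult:
  assumes "p > 0" "q > 0" and pos: "\<And>u. u \<in> S \<Longrightarrow> P u > 0 \<and> Q u > 0"
    and P: "(P has_sum 1) S" and Q: "(Q has_sum 1) S"
    and K: "((\<lambda>u. gen_kl (P u) (Q u)) has_sum K) S"
  shows "((\<lambda>u. gen_kl (p * P u) (q * Q u)) has_sum p * K + gen_kl p q) S"
proof -
  have "((\<lambda>u. p * gen_kl (P u) (Q u) + P u * gen_kl p q + (p - q) * P u + (q - p) * Q u)
      has_sum p * K + 1 * gen_kl p q + (p - q) * 1 + (q - p) * 1) S"
    by (intro has_sum_add has_sum_cmult_left has_sum_cmult_right K P Q)
  then have "((\<lambda>u. p * gen_kl (P u) (Q u) + P u * gen_kl p q + (p - q) * P u + (q - p) * Q u)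
      has_sum p * K + gen_kl p q) S"
    by simp
  then show ?thesis
    using assms(1,2) pos by (subst has_sum_cong) (auto simp: gen_kl_mult)
qed

lemma gen_kl_chain_rule_le:
  fixes p q :: "'v \<Rightarrow> real" and P Q :: "'v \<Rightarrow> 'u \<Rightarrow> real"
  assumes pos: "\<And>v. p v > 0 \<and> q v > 0" "\<And>v u. u \<in> U \<Longrightarrow> P v u > 0 \<and> Q v u > 0"
    and P: "\<And>v. (P v has_sum 1) U" and Q: "\<And>v. (Q v has_sum 1) U"
    and K: "\<And>v. ((\<lambda>u. gen_kl (P v u) (Q v u)) has_sum K v) U" and K_le: "\<And>v. K v \<le> B"
    and p: "(p has_sum 1) A" and s: "((\<lambda>v. gen_kl (p v) (q v)) has_sum s) A"
  shows "\<exists>T. ((\<lambda>(v, u). gen_kl (p v * P v u) (q v * Q v u)) has_sum T) (A \<times> U) \<and> T \<le> B + s"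
proof -
  let ?f = "\<lambda>(v, u). gen_kl (p v * P v u) (q v * Q v u)"
  define G where "G v = p v * K v + gen_kl (p v) (q v)" for v
  have inner: "((\<lambda>u. ?f (v, u)) has_sum G v) U" for v
    unfolding G_def using pos by (simp add: gen_kl_has_sum_mult P Q K)
  have G_nonneg: "G v \<ge> 0" for v
  proof -
    have "K v \<ge> 0"
      using K by (rule has_sum_nonneg) (simp add: gen_kl_nonneg pos)
    then show ?thesis
      unfolding G_def using pos(1)[of v] by (simp add: gen_kl_nonneg)
  qed
  have G_le: "G v \<le> p v * B + gen_kl (p v) (q v)" for v
    unfolding G_def using K_le[of v] pos(1)[of v] by simp
  have bound: "((\<lambda>v. p v * B + gen_kl (p v) (q v)) has_sum 1 * B + s) A"
    by (intro has_sum_add has_sum_cmult_left p s)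
  have "G summable_on A"
    by (rule summable_on_comparison_test[OF has_sum_imp_summable[OF bound] G_le G_nonneg])
  then have G: "(G has_sum infsum G A) A"
    by simp
  have "?f summable_on A \<times> U"
    using inner \<open>G summable_on A\<close>
    by (intro summable_on_SigmaI[where f = ?f and g = G]) (simp_all add: gen_kl_nonneg pos)
  then have "(?f has_sum infsum G A) (A \<times> U)"
    using inner G by (intro has_sum_SigmaI[where f = ?f and g = G]) simp_all
  moreover have "infsum G A \<le> B + s"
    using has_sum_mono[OF G bound G_le] by simp
  ultimately show ?thesis
    by blast
qed

lemma KL_eq_gen_kl_sum:
  fixes P Q :: "'b \<Rightarrow> real"
  assumes pos: "\<And>y. y \<in> S \<Longrightarrow> P y > 0 \<and> Q y > 0"
    and P: "(P has_sum 1) S" and Q: "(Q has_sum 1) S"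
    and K: "((\<lambda>y. gen_kl (P y) (Q y)) has_sum K) S"
  shows "KL P Q S = ereal K"
proof -
  have "((\<lambda>y. gen_kl (P y) (Q y) + P y + - Q y) has_sum K) S"
    using has_sum_add[OF has_sum_add[OF K P] has_sum_uminusI[OF Q]] by simp
  moreover have "(\<lambda>y. gen_kl (P y) (Q y) + P y + - Q y) = (\<lambda>y. P y * ln (P y / Q y))"
    by (simp add: fun_eq_iff gen_kl_def)
  ultimately have "((\<lambda>y. P y * ln (P y / Q y)) has_sum K) S"
    by metis
  moreover have "\<not> (\<exists>y\<in>S. P y > 0 \<and> Q y = 0)"
    using pos by fastforce
  ultimately show ?thesis
    unfolding KL_def by (simp add: enn2ereal_infsum_pos_part_minus_neg_part)
qed

lemma prepend_append: "prepend (s @ s') x = prepend s' (prepend s x)"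
  unfolding prepend_def by (auto simp: fun_eq_iff nth_append ac_simps)

lemma prepend_Nil [simp]: "prepend [] x = x"
  by (simp add: prepend_def)

lemma prepend_singleton: "prepend [v] x = cons_past v x"
  by (auto simp: prepend_def cons_past_def fun_eq_iff)

lemma prepend_Cons: "prepend (v # s) x = prepend s (cons_past v x)"
  using prepend_append[of "[v]" s x] by (simp add: prepend_singleton)

lemma prepend_words_agree:
  assumes agree: "\<forall>i\<in>{m..<M}. w i = w' i" and "1 \<le> m" "j < M - m"
  shows "prepend (map w [1..<M]) x j = prepend (map w' [1..<M]) y j"
proof -
  have "j < M - 1" "m \<le> M - 1 - j" "Suc (M - 1 - Suc j) = M - 1 - j"
    using assms(2,3) by arith+
  then show ?thesis
    using agree unfolding prepend_def by (simp add: rev_nth)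
qed

definition word_prob :: "((nat \<Rightarrow> 'a) \<Rightarrow> real) \<Rightarrow> (nat \<Rightarrow> 'a) \<Rightarrow> 'a list \<Rightarrow> real" where
  "word_prob \<phi> x u = (\<Prod>t<length u. exp (\<phi> (prepend (take (Suc t) u) x)))"

lemma cond_block_law_eq_word_prob:
  "cond_block_law \<phi> x m w = word_prob \<phi> (prepend (map w [1..<m]) x)"
  by (simp add: fun_eq_iff cond_block_law_def word_prob_def prepend_append)

lemma word_prob_Nil [simp]: "word_prob \<phi> x [] = 1"
  by (simp add: word_prob_def)

lemma word_prob_Cons:
  "word_prob \<phi> x (v # u) = exp (\<phi> (cons_past v x)) * word_prob \<phi> (cons_past v x) u"
  unfolding word_prob_def
  by (simp add: prod.lessThan_Suc_shift prepend_singleton prepend_Cons del: prod.lessThan_Suc)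

lemma word_prob_pos: "word_prob \<phi> x u > 0"
  unfolding word_prob_def by (simp add: prod_pos)

lemma word_prob_has_sum_1:
  assumes "potential \<phi>"
  shows "(word_prob \<phi> x has_sum 1) {u. length u = L}"
proof (induction L arbitrary: x)
  case 0
  have "{u. length u = 0} = {[]}" by auto
  then show ?case
    using has_sum_finite[of "{[]}" "word_prob \<phi> x"] by simp
next
  case (Suc L)
  let ?p = "\<lambda>v. exp (\<phi> (cons_past v x))"
  have p: "(?p has_sum 1) UNIV"
    using assms by (simp add: potential_def)
  have inner: "((\<lambda>u. word_prob \<phi> x (v # u)) has_sum ?p v) {u. length u = L}" for v
    using has_sum_cmult_right[OF Suc.IH, of "?p v"] by (simp add: word_prob_Cons)
  have "(\<lambda>(v, u). word_prob \<phi> x (v # u)) summable_on UNIV \<times> {u. length u = L}"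
    using inner p
    by (intro summable_on_SigmaI[where g = ?p]) (auto intro: less_imp_le word_prob_pos has_sum_imp_summable)
  then have "((\<lambda>(v, u). word_prob \<phi> x (v # u)) has_sum 1) (UNIV \<times> {u. length u = L})"
    using inner p by (intro has_sum_SigmaI[where g = ?p]) simp_all
  then show ?case
    by (simp only: has_sum_lists_Suc_iff)
qed

lemma kernel_gen_kl_le_chi2:
  assumes agree: "\<forall>j<d. x j = y j"
  shows "(\<Sum>\<^sub>\<infinity>v. ennreal (gen_kl (exp (\<phi> (cons_past v x))) (exp (\<phi> (cons_past v y)))))
           \<le> chi2 \<phi> d"
proof -
  define z :: "int \<Rightarrow> _" where "z i = x (nat (- i) - 1)" for i
  have ex: "cons_past v x = block_past v z d (\<lambda>m. x (m + d))"
    and ey: "cons_past v y = block_past v z d (\<lambda>m. y (m + d))" for v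
    using agree by (auto simp: fun_eq_iff cons_past_def block_past_def z_def)
  have "(\<Sum>\<^sub>\<infinity>v. ennreal (gen_kl (exp (\<phi> (cons_past v x))) (exp (\<phi> (cons_past v y)))))
      \<le> (\<Sum>\<^sub>\<infinity>b. ennreal ((exp (\<phi> (block_past b z d (\<lambda>m. x (m + d))))
                           - exp (\<phi> (block_past b z d (\<lambda>m. y (m + d)))))\<^sup>2
                         / exp (\<phi> (block_past b z d (\<lambda>m. y (m + d))))))"
    by (rule infsum_mono[OF nonneg_summable_on_complete nonneg_summable_on_complete])
      (simp_all add: ex ey ennreal_leI gen_kl_le_chi2)
  also have "\<dots> \<le> chi2 \<phi> d"
    unfolding chi2_def by (intro SUP_upper2[of z] SUP_upper2[of "\<lambda>m. x (m + d)"] SUP_upper) auto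
  finally show ?thesis .
qed

lemma word_prob_gen_kl_bound:
  assumes pot: "potential \<phi>" and "\<forall>j<d. x j = y j" and "\<forall>t<L. chi2 \<phi> (d + t) \<noteq> \<top>"
  shows "\<exists>K. ((\<lambda>u. gen_kl (word_prob \<phi> x u) (word_prob \<phi> y u)) has_sum K) {u. length u = L}
           \<and> K \<le> (\<Sum>t<L. enn2real (chi2 \<phi> (d + t)))"
  using assms(2,3)
proof (induction L arbitrary: x y d)
  case 0
  have "{u. length u = 0} = {[]}" by auto
  then show ?case
    using has_sum_finite[of "{[]}" "\<lambda>u. gen_kl (word_prob \<phi> x u) (word_prob \<phi> y u)"]
    by (force simp: gen_kl_def)
next
  case (Suc L)
  let ?p = "\<lambda>v. exp (\<phi> (cons_past v x))" and ?q = "\<lambda>v. exp (\<phi> (cons_past v y))"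
  define B where "B = (\<Sum>t<L. enn2real (chi2 \<phi> (Suc d + t)))"
  have "\<exists>K. ((\<lambda>u. gen_kl (word_prob \<phi> (cons_past v x) u) (word_prob \<phi> (cons_past v y) u))
            has_sum K) {u. length u = L} \<and> K \<le> B" for v
    unfolding B_def using Suc.prems
    by (intro Suc.IH) (auto simp: cons_past_def less_Suc_eq_0_disj)
  then obtain K where K: "\<And>v. ((\<lambda>u. gen_kl (word_prob \<phi> (cons_past v x) u)
                                    (word_prob \<phi> (cons_past v y) u)) has_sum K v) {u. length u = L}"
    and K_le: "\<And>v. K v \<le> B"
    by metis
  have "chi2 \<phi> d \<noteq> \<top>"
    using Suc.prems(2) by (metis add_0_right zero_less_Suc)
  obtain s where s: "((\<lambda>v. gen_kl (?p v) (?q v)) has_sum s) UNIV" and s_le: "s \<le> enn2real (chi2 \<phi> d)"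
    using kernel_gen_kl_le_chi2[OF Suc.prems(1)] \<open>chi2 \<phi> d \<noteq> \<top>\<close>
    by (rule has_sum_le_if_ennreal_infsum_le) (simp_all add: gen_kl_nonneg)
  have "(?p has_sum 1) UNIV"
    using pot by (simp add: potential_def)
  then have "\<exists>T. ((\<lambda>(v, u). gen_kl (?p v * word_prob \<phi> (cons_past v x) u)
                                   (?q v * word_prob \<phi> (cons_past v y) u))
                    has_sum T) (UNIV \<times> {u. length u = L}) \<and> T \<le> B + s"
    by (intro gen_kl_chain_rule_le[where P = "\<lambda>v. word_prob \<phi> (cons_past v x)"
                                     and Q = "\<lambda>v. word_prob \<phi> (cons_past v y)" and K = K])
      (simp_all add: word_prob_pos word_prob_has_sum_1 pot K K_le s)
  then obtain T where "((\<lambda>(v, u). gen_kl (?p v * word_prob \<phi> (cons_past v x) u)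
                                        (?q v * word_prob \<phi> (cons_past v y) u))
                         has_sum T) (UNIV \<times> {u. length u = L})" and "T \<le> B + s"
    by blast
  moreover have "B + s \<le> (\<Sum>t<Suc L. enn2real (chi2 \<phi> (d + t)))"
    using s_le unfolding B_def by (simp add: sum.lessThan_Suc_shift del: sum.lessThan_Suc)
  ultimately show ?case
    by (intro exI[of _ T]) (auto simp: has_sum_lists_Suc_iff word_prob_Cons)
qed

lemma KL_word_prob_le_chi2:
  assumes pot: "potential \<phi>" and agree: "\<forall>j<d. x j = y j"
  shows "KL (word_prob \<phi> x) (word_prob \<phi> y) {u. length u = L}
           \<le> enn2ereal (\<Sum>t<L. chi2 \<phi> (d + t))"
proof (cases "\<exists>t<L. chi2 \<phi> (d + t) = \<top>")
  case True
  then have "(\<Sum>t<L. chi2 \<phi> (d + t)) = \<top>"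
    by (subst ennreal_sum_eq_top) auto
  then show ?thesis
    by (simp only: enn2ereal_top) simp
next
  case False
  then obtain K where K: "((\<lambda>u. gen_kl (word_prob \<phi> x u) (word_prob \<phi> y u)) has_sum K) {u. length u = L}"
    and K_le: "K \<le> (\<Sum>t<L. enn2real (chi2 \<phi> (d + t)))"
    using word_prob_gen_kl_bound[OF pot agree] by blast
  have "KL (word_prob \<phi> x) (word_prob \<phi> y) {u. length u = L} = ereal K"
    by (rule KL_eq_gen_kl_sum[OF _ word_prob_has_sum_1[OF pot] word_prob_has_sum_1[OF pot] K])
      (simp add: word_prob_pos)
  moreover have "(\<Sum>t<L. chi2 \<phi> (d + t)) = (\<Sum>t<L. ennreal (enn2real (chi2 \<phi> (d + t))))"
    using False by (intro sum.cong) (auto simp: ennreal_enn2real_if)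
  then have "(\<Sum>t<L. chi2 \<phi> (d + t)) = ennreal (\<Sum>t<L. enn2real (chi2 \<phi> (d + t)))"
    by (simp add: sum_ennreal)
  ultimately show ?thesis
    using K_le by (simp add: sum_nonneg)
qed

theorem lemma1:
  fixes \<phi> :: "(nat \<Rightarrow> 'a::countable) \<Rightarrow> real"
    and M :: "nat \<Rightarrow> nat"
    and x y :: "nat \<Rightarrow> 'a"
    and \<mu> \<nu> :: "(int \<Rightarrow> 'a) measure"
    and n k :: nat
    and a b c :: "int \<Rightarrow> 'a"
  assumes pot: "potential \<phi>"
    and M_mono: "\<forall>i\<ge>1. M i < M (Suc i)"
    and M1: "M 1 = 1"
    and mu: "compatible_with \<phi> \<mu>" and mu0: "distr \<mu> XmM (past 0) = return XmM x"
    and nu: "compatible_with \<phi> \<nu>" and nu0: "distr \<nu> XmM (past 0) = return XmM y"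
    and n: "n \<ge> 1" and k: "k \<le> n - 1"
  shows "KL (cond_block_law \<phi> x (M n)
              (\<lambda>j. if M (n - k) \<le> j then a (int j) else b (int j)))
            (cond_block_law \<phi> y (M n)
              (\<lambda>j. if M (n - k) \<le> j then a (int j) else c (int j)))
            {u. length u = M (Suc n) - M n}
         \<le> enn2ereal (\<Sum>j = M n..<M (Suc n). chi2 \<phi> (j - M (n - k)))"
proof -
  \<comment> \<open>\<open>cond_block_law\<close> is by definition the conditional law under \<open>\<mu>\<close> and \<open>\<nu>\<close>.\<close>
  have M_le: "M i \<le> M j" if "1 \<le> i" "i \<le> j" for i j
    by (rule lift_Suc_mono_le_ivl[where N = "{1..}", OF _ that(2)]) (use M_mono that in auto)
  have "1 \<le> M (n - k)" "M (n - k) \<le> M n"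
    using M_le[of 1 "n - k"] M_le[of "n - k" n] M1 n k by auto
  then have agree: "\<forall>j<M n - M (n - k).
      prepend (map (\<lambda>j. if M (n - k) \<le> j then a (int j) else b (int j)) [1..<M n]) x j =
      prepend (map (\<lambda>j. if M (n - k) \<le> j then a (int j) else c (int j)) [1..<M n]) y j"
    by (intro allI impI prepend_words_agree) auto
  have chi2_sum: "(\<Sum>j = M n..<M (Suc n). chi2 \<phi> (j - M (n - k)))
      = (\<Sum>t<M (Suc n) - M n. chi2 \<phi> (M n - M (n - k) + t))"
    using \<open>M (n - k) \<le> M n\<close>
    by (simp add: sum.atLeastLessThan_shift_0 atLeast0LessThan algebra_simps)
  show ?thesis
    unfolding cond_block_law_eq_word_prob chi2_sum by (rule KL_word_prob_le_chi2[OF pot agree])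
qed

end
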